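(* Let $d\ge1$, let $X$ be a lazy simple random walk on $\mathbb{Z}^d$ started at a fixed point, and let $f:\{0,1,2,\dots\}\to\mathbb{Z}^d$ be any function. Then for all $t\in\mathbb{N}$ and all $n\in\mathbb{N}$, \[ \mathbb{E}\Big[\mathrm{vol}\Big(\bigcup_{s=0}^{t}\big(X_s+f(s)+Q_n\big)\Big)\Big]\ \ge\ \mathbb{E}\Big[\mathrm{vol}\Big(\bigcup_{s=0}^{t}\big(X_s+Q_n\big)\Big)\Big], \] where $Q_n=[-n,n]^d\cap\mathbb{Z}^d$.
   Context: The lazy simple random walk on $\mathbb{Z}^d$ stays put with probability $1/2$ and otherwise moves from $x$ to $x\pm e_i$ ($i=1,\dots,d$), each with probability $1/(4d)$. For a finite set $S\subseteq\mathbb{Z}^d$, $\mathrm{vol}(S)$ is its cardinality, and $x+S=\{x+y:y\in S\}$. *)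

theory Defs
  imports "HOL-Analysis.Analysis" "HOL-Probability.Probability"
begin

text \<open>Points of Z^d are modelled as int ^ 'd for a finite index type 'd, so d = CARD('d) >= 1.\<close>

definition lazy_step :: "int ^ 'd::finite \<Rightarrow> (int ^ 'd) pmf" where
  "lazy_step x = bind_pmf (bernoulli_pmf (1/2)) (\<lambda>stay.
     if stay then return_pmf x
     else map_pmf (\<lambda>(i, pos). x + axis i (if pos then 1 else -1))
                  (pmf_of_set (UNIV :: ('d \<times> bool) set)))"

text \<open>Distribution of the trajectory (X_0, ..., X_t) of the lazy walk started at x0,
  as a list of length t+1 whose s-th entry is X_s.\<close>
fun lazy_walk :: "int ^ 'd::finite \<Rightarrow> nat \<Rightarrow> (int ^ 'd) list pmf" where
  "lazy_walk x0 0 = return_pmf [x0]"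
| "lazy_walk x0 (Suc t) = bind_pmf (lazy_walk x0 t)
     (\<lambda>xs. map_pmf (\<lambda>y. xs @ [y]) (lazy_step (last xs)))"

definition box_Q :: "nat \<Rightarrow> (int ^ 'd::finite) set" where
  "box_Q n = {x. \<forall>i. \<bar>x $ i\<bar> \<le> int n}"

definition vol :: "'a set \<Rightarrow> real" where
  "vol S = real (card S)"

end

theory Submission
  imports Defs
begin

text \<open>Write the expected covered volume as \<open>|A|\<close> minus the total mass of lazy-walk paths,
  started anywhere in a large box \<open>A\<close>, that avoid the moving boxes \<open>- c s + Q\<^sub>n\<close> at every
  time \<open>s \<le> t\<close>. Reflecting, in a hyperplane \<open>2 x\<^sub>i = k\<close> with \<open>k\<close> odd, the box centres that
  lie on one side of it can only increase this survival mass: the step kernel is symmetric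
  and unimodal in each coordinate, so the two-point rearrangement inequality applies to the
  path sums, pairing each point with its mirror image. A suitable such polarization strictly
  decreases \<open>\<Sum>\<^sub>s \<parallel>c s\<parallel>\<^sub>1\<close> unless all shifts vanish, so by induction the unshifted walk
  covers the least expected volume.\<close>

definition cube :: "int \<Rightarrow> (int ^ 'd::finite) set" where
  "cube r = {x. \<forall>i. \<bar>x $ i\<bar> \<le> r}"

definition flip_coord :: "'d::finite \<Rightarrow> int ^ 'd \<Rightarrow> int ^ 'd" where
  "flip_coord i v = (\<chi> j. if j = i then - v $ j else v $ j)"

lemma box_Q_eq_cube: "box_Q n = cube (int n)"
  by (simp add: box_Q_def cube_def)

lemma finite_cube: "finite (cube r :: (int ^ 'd::finite) set)"
proof -
  have "cube r \<subseteq> vec_lambda ` PiE UNIV (\<lambda>_::'d. {-r..r})"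
  proof
    fix x :: "int ^ 'd" assume "x \<in> cube r"
    then have "(($) x) \<in> PiE UNIV (\<lambda>_. {-r..r})"
      by (auto simp: cube_def abs_le_iff) (meson minus_le_iff)
    then show "x \<in> vec_lambda ` PiE UNIV (\<lambda>_::'d. {-r..r})"
      by (metis image_eqI vec_lambda_eta)
  qed
  moreover have "finite (PiE UNIV (\<lambda>_::'d. {-r..r}))" by (intro finite_PiE) auto
  ultimately show ?thesis using finite_subset by blast
qed

lemma add_in_cube: "v \<in> cube r \<Longrightarrow> w \<in> cube r' \<Longrightarrow> v + w \<in> cube (r + r')"
  unfolding cube_def by (auto intro: order_trans[OF abs_triangle_ineq] add_mono)

lemma cube_mono: "r \<le> r' \<Longrightarrow> cube r \<subseteq> cube r'"
  unfolding cube_def by (auto intro: order_trans)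

lemma uminus_in_cube_iff [simp]: "- x \<in> cube r \<longleftrightarrow> x \<in> cube r"
  by (simp add: cube_def)

lemma flip_coord_in_cube_iff [simp]: "flip_coord i v \<in> cube r \<longleftrightarrow> v \<in> cube r"
  by (auto simp: flip_coord_def cube_def)

lemma in_cube_if_coord_le:
  assumes "\<And>j. j \<noteq> i \<Longrightarrow> u $ j = v $ j" and "\<bar>u $ i\<bar> \<le> \<bar>v $ i\<bar>" and "v \<in> cube r"
  shows "u \<in> cube r"
  unfolding cube_def
proof (intro CollectI allI)
  fix j
  have "\<bar>v $ j\<bar> \<le> r" "\<bar>v $ i\<bar> \<le> r" using assms(3) by (auto simp: cube_def)
  then show "\<bar>u $ j\<bar> \<le> r" using assms(1,2) by (cases "j = i") auto
qed

subsection \<open>The step kernel of the lazy walk\<close>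

definition unit_step :: "'d::finite \<times> bool \<Rightarrow> int ^ 'd" where
  "unit_step = (\<lambda>(i, pos). axis i (if pos then 1 else -1))"

definition lazy_kernel :: "int ^ 'd::finite \<Rightarrow> real" where
  "lazy_kernel v = pmf (lazy_step 0) v"

lemma lazy_step_unfold:
  "lazy_step x = bind_pmf (bernoulli_pmf (1/2)) (\<lambda>stay.
     if stay then return_pmf x else map_pmf (\<lambda>p. x + unit_step p) (pmf_of_set UNIV))"
  unfolding lazy_step_def
  by (intro bind_pmf_cong refl) (auto simp: unit_step_def intro!: map_pmf_cong)

lemma lazy_step_shift: "lazy_step x = map_pmf ((+) x) (lazy_step 0)"
  unfolding lazy_step_unfold map_bind_pmf
  by (intro bind_pmf_cong refl) (simp add: pmf.map_comp o_def)

lemma pmf_lazy_step: "pmf (lazy_step x) y = lazy_kernel (y - x)"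
proof -
  have "pmf (lazy_step x) y = pmf (map_pmf ((+) x) (lazy_step 0)) (x + (y - x))"
    by (subst lazy_step_shift) simp
  also have "\<dots> = lazy_kernel (y - x)"
    unfolding lazy_kernel_def by (rule pmf_map_inj') (simp add: inj_def)
  finally show ?thesis .
qed

lemma set_lazy_step_0: "set_pmf (lazy_step 0) \<subseteq> insert 0 (range unit_step)"
  by (auto simp: lazy_step_unfold split: if_splits)

lemma unit_step_in_cube: "unit_step p \<in> cube 1"
  by (cases p) (auto simp: unit_step_def cube_def axis_def)

lemma set_lazy_step: "set_pmf (lazy_step x) \<subseteq> (+) x ` cube 1"
proof -
  have "insert 0 (range unit_step) \<subseteq> cube 1"
    using unit_step_in_cube by (auto simp: cube_def)
  then have "set_pmf (lazy_step 0) \<subseteq> cube 1"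
    using set_lazy_step_0 by blast
  then show ?thesis
    using image_mono[of _ _ "(+) x"] by (subst lazy_step_shift) simp
qed

lemma finite_set_lazy_step: "finite (set_pmf (lazy_step x))"
  using set_lazy_step by (rule finite_subset) (simp add: finite_cube)

lemma lazy_kernel_nonneg: "0 \<le> lazy_kernel v"
  by (simp add: lazy_kernel_def)

lemma lazy_kernel_support: "lazy_kernel v \<noteq> 0 \<Longrightarrow> v \<in> cube 1"
  using set_lazy_step[of 0] by (auto simp: lazy_kernel_def set_pmf_iff)

lemma lazy_kernel_eq:
  "lazy_kernel v = (if v = 0 then 1/2 else 0) + 1/2 * pmf (map_pmf unit_step (pmf_of_set UNIV)) v"
  unfolding lazy_kernel_def lazy_step_unfold pmf_bind
  by (subst integral_bernoulli_pmf) (auto simp: pmf_return)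

lemma lazy_kernel_0: "lazy_kernel 0 = 1/2"
proof -
  have "unit_step p \<noteq> 0" for p
    by (cases p) (auto simp: unit_step_def axis_eq_0_iff)
  then have "0 \<notin> set_pmf (map_pmf unit_step (pmf_of_set UNIV))"
    by (metis (no_types, lifting) imageE set_map_pmf)
  then have "pmf (map_pmf unit_step (pmf_of_set UNIV)) 0 = 0"
    by (simp add: set_pmf_eq)
  then show ?thesis by (simp add: lazy_kernel_eq)
qed

lemma lazy_kernel_le: "v \<noteq> 0 \<Longrightarrow> lazy_kernel v \<le> 1/2"
  by (simp add: lazy_kernel_eq pmf_le_1)

lemma flip_coord_flip_coord [simp]: "flip_coord i (flip_coord i v) = v"
  by (simp add: flip_coord_def vec_eq_iff)

lemma inj_flip_coord: "inj (flip_coord i)"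
  by (rule injI) (metis flip_coord_flip_coord)

lemma lazy_step_0_flip_coord:
  fixes i :: "'d::finite"
  shows "map_pmf (flip_coord i) (lazy_step 0) = (lazy_step 0 :: (int ^ 'd) pmf)"
proof -
  define h where "h = (\<lambda>(j::'d, pos::bool). (j, if j = i then \<not> pos else pos))"
  have "h (h p) = p" for p by (auto simp: h_def split: prod.splits)
  then have "bij h" by (metis o_bij comp_apply id_apply ext)
  then have uniform: "map_pmf h (pmf_of_set UNIV) = pmf_of_set UNIV"
    by (simp add: map_pmf_of_set_inj bij_is_inj bij_is_surj)
  have "flip_coord i \<circ> unit_step = unit_step \<circ> h"
    by (auto simp: flip_coord_def unit_step_def h_def axis_def vec_eq_iff)
  then have "map_pmf (flip_coord i) (map_pmf unit_step (pmf_of_set UNIV))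
      = map_pmf unit_step (pmf_of_set UNIV)"
    by (metis pmf.map_comp uniform)
  moreover have "flip_coord i 0 = 0" by (simp add: flip_coord_def vec_eq_iff)
  ultimately show ?thesis
    unfolding lazy_step_unfold map_bind_pmf
    by (intro bind_pmf_cong refl) (simp add: pmf.map_comp o_def)
qed

lemma lazy_kernel_flip_coord [simp]: "lazy_kernel (flip_coord i v) = lazy_kernel v"
  unfolding lazy_kernel_def
  by (metis lazy_step_0_flip_coord pmf_map_inj' inj_flip_coord)

text \<open>Holds because the kernel is supported on 0 and the unit vectors and gives weight 1/2 to 0.\<close>
lemma lazy_kernel_coord_mono:
  assumes agree: "\<And>j. j \<noteq> i \<Longrightarrow> u $ j = v $ j" and le: "\<bar>u $ i\<bar> \<le> \<bar>v $ i\<bar>"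
  shows "lazy_kernel v \<le> lazy_kernel u"
proof (cases "\<bar>u $ i\<bar> = \<bar>v $ i\<bar>")
  case True
  then consider "u $ i = v $ i" | "u $ i = - v $ i" by linarith
  then have "u = v \<or> u = flip_coord i v"
  proof cases
    case 1 then show ?thesis using agree by (metis vec_eq_iff)
  next
    case 2 then show ?thesis using agree by (auto simp: vec_eq_iff flip_coord_def)
  qed
  then show ?thesis by auto
next
  case False
  show ?thesis
  proof (cases "lazy_kernel v = 0")
    case True then show ?thesis by (simp add: lazy_kernel_nonneg)
  next
    case nonzero: False
    have "v $ i \<noteq> 0" using False le by auto
    then have "v \<noteq> 0" by auto
    with nonzero obtain p where v: "v = unit_step p"
      using set_lazy_step_0 by (auto simp: lazy_kernel_def set_pmf_iff)
    then have "v $ j = 0" if "j \<noteq> i" for j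
      using \<open>v $ i \<noteq> 0\<close> that by (auto simp: unit_step_def axis_def split: prod.splits if_splits)
    moreover have "\<bar>v $ i\<bar> = 1"
      using v \<open>v $ i \<noteq> 0\<close> by (auto simp: unit_step_def axis_def split: prod.splits if_splits)
    ultimately have "u $ j = 0" for j
      using agree[of j] False le by (cases "j = i") auto
    then have "u = 0" by (simp add: vec_eq_iff)
    then show ?thesis using lazy_kernel_le[OF \<open>v \<noteq> 0\<close>] by (simp add: lazy_kernel_0)
  qed
qed

lemma expectation_bind_pmf_finite:
  fixes f :: "'b \<Rightarrow> real"
  assumes fin_M: "finite (set_pmf M)" and fin_N: "\<And>x. x \<in> set_pmf M \<Longrightarrow> finite (set_pmf (N x))"
  shows "measure_pmf.expectation (bind_pmf M N) f =
         measure_pmf.expectation M (\<lambda>x. measure_pmf.expectation (N x) f)"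
proof -
  define S where "S = (\<Union>x\<in>set_pmf M. set_pmf (N x))"
  have "finite S" using fin_M fin_N by (auto simp: S_def)
  have "measure_pmf.expectation (bind_pmf M N) f = (\<Sum>y\<in>S. f y * pmf (bind_pmf M N) y)"
    by (rule integral_measure_pmf_real) (use \<open>finite S\<close> in \<open>auto simp: S_def\<close>)
  also have "\<dots> = (\<Sum>y\<in>S. f y * (\<Sum>x\<in>set_pmf M. pmf (N x) y * pmf M x))"
    by (intro sum.cong refl arg_cong2[where f="(*)"], subst pmf_bind,
        rule integral_measure_pmf_real) (use fin_M in auto)
  also have "\<dots> = (\<Sum>x\<in>set_pmf M. (\<Sum>y\<in>S. f y * pmf (N x) y) * pmf M x)"
    by (simp add: sum_distrib_left sum_distrib_right sum.swap[of _ S] mult_ac)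
  also have "\<dots> = (\<Sum>x\<in>set_pmf M. measure_pmf.expectation (N x) f * pmf M x)"
    by (intro sum.cong refl arg_cong2[where f="(*)"], rule sym, rule integral_measure_pmf_real)
       (use \<open>finite S\<close> in \<open>auto simp: S_def\<close>)
  also have "\<dots> = measure_pmf.expectation M (\<lambda>x. measure_pmf.expectation (N x) f)"
    by (rule sym, rule integral_measure_pmf_real) (use fin_M in auto)
  finally show ?thesis .
qed

lemma expectation_lazy_step:
  fixes h :: "int ^ 'd::finite \<Rightarrow> real"
  shows "measure_pmf.expectation (lazy_step x) h = (\<Sum>w\<in>cube 1. lazy_kernel w * h (x + w))"
proof -
  have "measure_pmf.expectation (lazy_step x) h = (\<Sum>y\<in>(+) x ` cube 1. h y * pmf (lazy_step x) y)"
    by (rule integral_measure_pmf_real) (use set_lazy_step finite_cube in auto)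
  also have "\<dots> = (\<Sum>w\<in>cube 1. lazy_kernel w * h (x + w))"
    by (subst sum.reindex) (auto simp: inj_def pmf_lazy_step mult.commute)
  finally show ?thesis .
qed

lemma lazy_walk_support:
  assumes "xs \<in> set_pmf (lazy_walk x0 t)"
  shows "length xs = Suc t" and "\<And>s. s \<le> t \<Longrightarrow> xs ! s - x0 \<in> cube (int s)"
proof -
  have "length xs = Suc t \<and> (\<forall>s\<le>t. xs ! s - x0 \<in> cube (int s))"
    using assms
  proof (induction t arbitrary: xs)
    case 0 then show ?case by (auto simp: cube_def)
  next
    case (Suc t)
    then obtain ys y where ys: "ys \<in> set_pmf (lazy_walk x0 t)"
      and y: "y \<in> set_pmf (lazy_step (last ys))" and xs: "xs = ys @ [y]"
      by auto
    from Suc.IH[OF ys] have len: "length ys = Suc t"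
      and disp: "\<forall>s\<le>t. ys ! s - x0 \<in> cube (int s)" by auto
    have "last ys = ys ! t" using len by (subst last_conv_nth) auto
    then have "y - ys ! t \<in> cube 1" using y set_lazy_step by fastforce
    then have "(y - ys ! t) + (ys ! t - x0) \<in> cube (1 + int t)"
      using disp add_in_cube by blast
    then have "y - x0 \<in> cube (int (Suc t))" by simp
    with disp len show ?case by (auto simp: xs nth_append le_Suc_eq)
  qed
  then show "length xs = Suc t" and "\<And>s. s \<le> t \<Longrightarrow> xs ! s - x0 \<in> cube (int s)" by auto
qed

lemma finite_set_lazy_walk: "finite (set_pmf (lazy_walk x0 t))"
  by (induction t) (auto simp: finite_set_lazy_step)

lemma expectation_lazy_walk_Suc:
  fixes F :: "(int ^ 'd::finite) list \<Rightarrow> real"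
  shows "measure_pmf.expectation (lazy_walk x0 (Suc t)) F =
    measure_pmf.expectation (lazy_walk x0 t)
      (\<lambda>xs. \<Sum>w\<in>cube 1. lazy_kernel w * F (xs @ [last xs + w]))"
  by (simp only: lazy_walk.simps, subst expectation_bind_pmf_finite)
     (auto simp: finite_set_lazy_walk finite_set_lazy_step expectation_lazy_step)

subsection \<open>Two-point rearrangement of killed transition sums\<close>

text \<open>\<open>dominated a b a' b'\<close>: the pair \<open>(a', b')\<close> is at least \<open>(a, b)\<close> after sorting,
  with \<open>a'\<close> its larger entry.\<close>
definition dominated :: "real \<Rightarrow> real \<Rightarrow> real \<Rightarrow> real \<Rightarrow> bool" where
  "dominated a b a' b' \<longleftrightarrow>
     0 \<le> a \<and> 0 \<le> b \<and> 0 \<le> b' \<and> a \<le> a' \<and> b \<le> a' \<and> b' \<le> a' \<and> a + b \<le> a' + b'"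

lemma dominated_add:
  "dominated a b a' b' \<Longrightarrow> dominated c d c' d' \<Longrightarrow> dominated (a + c) (b + d) (a' + c') (b' + d')"
  by (simp add: dominated_def)

lemma dominated_sum:
  assumes "\<And>u. u \<in> S \<Longrightarrow> dominated (f u) (g u) (f' u) (g' u)"
  shows "dominated (\<Sum>u\<in>S. f u) (\<Sum>u\<in>S. g u) (\<Sum>u\<in>S. f' u) (\<Sum>u\<in>S. g' u)"
  using assms
proof (induction S rule: infinite_finite_induct)
  case (insert u S)
  then show ?case by (simp add: dominated_add)
qed (simp_all add: dominated_def)

lemma dominated_mix:
  assumes "b \<le> a" "0 \<le> b" and dom: "dominated \<alpha> \<beta> \<alpha>' \<beta>'"
  shows "dominated (a * \<alpha> + b * \<beta>) (b * \<alpha> + a * \<beta>) (a * \<alpha>' + b * \<beta>') (b * \<alpha>' + a * \<beta>')"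
proof -
  have "0 \<le> \<alpha>" "0 \<le> \<beta>" "0 \<le> \<beta>'" "\<alpha> \<le> \<alpha>'" "\<beta> \<le> \<alpha>'" "\<beta>' \<le> \<alpha>'" "\<alpha> + \<beta> \<le> \<alpha>' + \<beta>'"
    using dom by (auto simp: dominated_def)
  moreover have "0 \<le> b * (\<alpha>' + \<beta>' - (\<alpha> + \<beta>))" "0 \<le> (a + b) * (\<alpha>' + \<beta>' - (\<alpha> + \<beta>))"
    "0 \<le> (a - b) * (\<alpha>' - \<alpha>)" "0 \<le> (a - b) * (\<alpha>' - \<beta>)" "0 \<le> (a - b) * (\<alpha>' - \<beta>')"
    using calculation assms by simp_all
  ultimately show ?thesis
    using assms unfolding dominated_def by (simp add: algebra_simps)
qed

lemma dominated_scale: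
  assumes "0 \<le> \<gamma>" "0 \<le> \<delta>" and dom: "dominated P Q P' Q'"
  shows "dominated (\<gamma> * P) (\<delta> * Q) (max \<gamma> \<delta> * P') (min \<gamma> \<delta> * Q')"
proof -
  have bounds: "0 \<le> P" "0 \<le> Q" "0 \<le> Q'" "P \<le> P'" "Q \<le> P'" "Q' \<le> P'" "P + Q \<le> P' + Q'"
    using dom by (auto simp: dominated_def)
  have "\<gamma> * P + \<delta> * Q \<le> max \<gamma> \<delta> * P' + min \<gamma> \<delta> * Q'"
  proof (cases "\<delta> \<le> \<gamma>")
    case True
    have "0 \<le> \<delta> * (P' + Q' - (P + Q))" "0 \<le> (\<gamma> - \<delta>) * (P' - P)"
      using assms bounds True by simp_all
    then show ?thesis using True by (simp add: algebra_simps max_def min_def)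
  next
    case False
    have "0 \<le> \<gamma> * (P' + Q' - (P + Q))" "0 \<le> (\<delta> - \<gamma>) * (P' - Q)"
      using assms bounds False by simp_all
    then show ?thesis using False by (simp add: algebra_simps max_def min_def)
  qed
  then show ?thesis
    using assms bounds unfolding dominated_def by (auto intro: mult_mono)
qed

text \<open>\<open>killed_mass K Om A g s x\<close> is the total weight of \<open>K\<close>-paths \<open>x\<^sub>0, \<dots>, x\<^sub>s = x\<close> in
  \<open>Om\<close> started in \<open>A\<close>, where the step from \<open>u\<close> to \<open>x\<close> has weight \<open>K x u\<close> and
  the visit to \<open>x\<close> at time \<open>r\<close> has weight \<open>g r x\<close>.\<close>
fun killed_mass ::
    "('a \<Rightarrow> 'a \<Rightarrow> real) \<Rightarrow> 'a set \<Rightarrow> 'a set \<Rightarrow> (nat \<Rightarrow> 'a \<Rightarrow> real) \<Rightarrow> nat \<Rightarrow> 'a \<Rightarrow> real" where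
  "killed_mass K Om A g 0 x = g 0 x * indicator A x"
| "killed_mass K Om A g (Suc s) x = g (Suc s) x * (\<Sum>u\<in>Om. K x u * killed_mass K Om A g s u)"

locale reflection_pairing =
  fixes Om :: "'a set" and \<sigma> :: "'a \<Rightarrow> 'a" and H :: "'a set"
  assumes finite_Om: "finite Om"
    and reflect_closed: "x \<in> Om \<Longrightarrow> \<sigma> x \<in> Om"
    and involution: "\<sigma> (\<sigma> x) = x"
    and reflect_swaps_sides: "\<sigma> x \<in> H \<longleftrightarrow> x \<notin> H"
begin

lemma sum_pairs: "(\<Sum>x\<in>Om. F x) = (\<Sum>x\<in>Om \<inter> H. F x + F (\<sigma> x))"
proof -
  have "Om - H = \<sigma> ` (Om \<inter> H)"
    using reflect_closed reflect_swaps_sides involution by (auto intro: image_eqI[of _ \<sigma>, OF involution[symmetric]])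
  moreover have "inj_on \<sigma> (Om \<inter> H)" by (metis inj_onI involution)
  ultimately have "(\<Sum>x\<in>Om - H. F x) = (\<Sum>x\<in>Om \<inter> H. F (\<sigma> x))"
    by (simp add: sum.reindex)
  moreover have "(\<Sum>x\<in>Om. F x) = (\<Sum>x\<in>Om \<inter> H. F x) + (\<Sum>x\<in>Om - H. F x)"
    by (metis finite_Om sum.Int_Diff)
  ultimately show ?thesis by (simp add: sum.distrib)
qed

lemma sum_le_if_dominated:
  assumes "\<And>x. x \<in> H \<Longrightarrow> dominated (v x) (v (\<sigma> x)) (v' x) (v' (\<sigma> x))"
  shows "(\<Sum>x\<in>Om. v x) \<le> (\<Sum>x\<in>Om. v' x)"
  unfolding sum_pairs[of v] sum_pairs[of v']
  using assms by (intro sum_mono) (auto simp: dominated_def)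

text \<open>The two-point rearrangement inequality for killed path sums: \<open>g'\<close> puts the larger
  weight of each pair \<open>x, \<sigma> x\<close> on the side \<open>H\<close>, towards which \<open>K\<close> is biased.\<close>
lemma killed_mass_rearrangement:
  assumes A_symmetric: "\<And>x. \<sigma> x \<in> A \<longleftrightarrow> x \<in> A"
    and K_nonneg: "\<And>x u. 0 \<le> K x u"
    and K_reflect: "\<And>x u. x \<in> H \<Longrightarrow> u \<in> H \<Longrightarrow> K (\<sigma> x) (\<sigma> u) = K x u"
    and K_reflect_one: "\<And>x u. x \<in> H \<Longrightarrow> u \<in> H \<Longrightarrow> K (\<sigma> x) u = K x (\<sigma> u)"
    and K_same_side: "\<And>x u. x \<in> H \<Longrightarrow> u \<in> H \<Longrightarrow> K x (\<sigma> u) \<le> K x u"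
    and g_nonneg: "\<And>s x. 0 \<le> g s x"
    and g'_max: "\<And>s x. x \<in> H \<Longrightarrow> g' s x = max (g s x) (g s (\<sigma> x))"
    and g'_min: "\<And>s x. x \<in> H \<Longrightarrow> g' s (\<sigma> x) = min (g s x) (g s (\<sigma> x))"
    and "x \<in> H"
  shows "dominated (killed_mass K Om A g s x) (killed_mass K Om A g s (\<sigma> x))
           (killed_mass K Om A g' s x) (killed_mass K Om A g' s (\<sigma> x))"
  using \<open>x \<in> H\<close>
proof (induction s arbitrary: x)
  case 0
  then show ?case
    using g_nonneg[of 0 x] g_nonneg[of 0 "\<sigma> x"] g'_max[of x 0] g'_min[of x 0] A_symmetric[of x]
    by (auto simp: dominated_def max_def min_def)
next
  case (Suc s)
  let ?V = "killed_mass K Om A g s" and ?V' = "killed_mass K Om A g' s"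
  have pairs: "dominated (K x u * ?V u + K x (\<sigma> u) * ?V (\<sigma> u)) (K x (\<sigma> u) * ?V u + K x u * ?V (\<sigma> u))
      (K x u * ?V' u + K x (\<sigma> u) * ?V' (\<sigma> u)) (K x (\<sigma> u) * ?V' u + K x u * ?V' (\<sigma> u))"
    if "u \<in> Om \<inter> H" for u
    using that Suc by (intro dominated_mix K_same_side K_nonneg Suc.IH) auto
  have from_reflected: "(\<Sum>u\<in>Om. K (\<sigma> x) u * V u) = (\<Sum>u\<in>Om \<inter> H. K x (\<sigma> u) * V u + K x u * V (\<sigma> u))"
    for V
    using Suc.prems K_reflect K_reflect_one by (subst sum_pairs) (auto intro!: sum.cong)
  have "dominated (\<Sum>u\<in>Om. K x u * ?V u) (\<Sum>u\<in>Om. K (\<sigma> x) u * ?V u)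
      (\<Sum>u\<in>Om. K x u * ?V' u) (\<Sum>u\<in>Om. K (\<sigma> x) u * ?V' u)"
    unfolding from_reflected sum_pairs[of "\<lambda>u. K x u * _ u"] by (rule dominated_sum) (rule pairs)
  then show ?case
    using Suc.prems g'_max g'_min by (simp add: dominated_scale g_nonneg)
qed

end

abbreviation lazy_killed_mass ::
    "(int ^ 'd::finite) set \<Rightarrow> (int ^ 'd) set \<Rightarrow> (nat \<Rightarrow> int ^ 'd \<Rightarrow> real) \<Rightarrow> nat \<Rightarrow> int ^ 'd \<Rightarrow> real"
  where "lazy_killed_mass \<equiv> killed_mass (\<lambda>x u. lazy_kernel (x - u))"

lemma lazy_killed_mass_support:
  "lazy_killed_mass Om A g s x \<noteq> 0 \<Longrightarrow> \<exists>a\<in>A. x - a \<in> cube (int s)"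
proof (induction s arbitrary: x)
  case 0 then show ?case by (auto simp: cube_def split: split_indicator_asm)
next
  case (Suc s)
  then have "(\<Sum>u\<in>Om. lazy_kernel (x - u) * lazy_killed_mass Om A g s u) \<noteq> 0" by auto
  then obtain u where "u \<in> Om" and "lazy_kernel (x - u) * lazy_killed_mass Om A g s u \<noteq> 0"
    by (meson sum.not_neutral_contains_not_neutral)
  then have "x - u \<in> cube 1" and "lazy_killed_mass Om A g s u \<noteq> 0"
    using lazy_kernel_support by auto
  with Suc.IH obtain a where "a \<in> A" "u - a \<in> cube (int s)" by blast
  with add_in_cube[OF \<open>x - u \<in> cube 1\<close> this(2)] show ?case by auto
qed

lemma sum_lazy_kernel:
  fixes h :: "int ^ 'd::finite \<Rightarrow> real"
  assumes "finite Om" and "\<And>w. w \<in> cube 1 \<Longrightarrow> u + w \<in> Om"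
  shows "(\<Sum>x\<in>Om. lazy_kernel (x - u) * h x) = (\<Sum>w\<in>cube 1. lazy_kernel w * h (u + w))"
proof -
  have "(\<Sum>w\<in>cube 1. lazy_kernel w * h (u + w)) = (\<Sum>x\<in>(+) u ` cube 1. lazy_kernel (x - u) * h x)"
    by (subst sum.reindex) (auto simp: inj_def)
  also have "\<dots> = (\<Sum>x\<in>Om. lazy_kernel (x - u) * h x)"
  proof (rule sum.mono_neutral_left[OF \<open>finite Om\<close>])
    show "(+) u ` cube 1 \<subseteq> Om" using assms(2) by auto
    show "\<forall>x\<in>Om - (+) u ` cube 1. lazy_kernel (x - u) * h x = 0"
    proof
      fix x assume "x \<in> Om - (+) u ` cube 1"
      then have "x - u \<notin> cube 1" by (auto simp: image_iff)
      then show "lazy_kernel (x - u) * h x = 0" using lazy_kernel_support by auto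
    qed
  qed
  finally show ?thesis by simp
qed

lemma expectation_lazy_walk_Suc_weighted:
  fixes g :: "nat \<Rightarrow> int ^ 'd::finite \<Rightarrow> real" and \<phi> :: "int ^ 'd \<Rightarrow> real"
  shows "measure_pmf.expectation (lazy_walk x0 (Suc t))
           (\<lambda>X. (\<Prod>s\<in>{0..Suc t}. g s (X ! s - x0 + a)) * \<phi> (X ! Suc t - x0 + a))
       = measure_pmf.expectation (lazy_walk x0 t)
           (\<lambda>X. (\<Prod>s\<in>{0..t}. g s (X ! s - x0 + a)) *
                (\<Sum>w\<in>cube 1. lazy_kernel w * (g (Suc t) (X ! t - x0 + a + w) * \<phi> (X ! t - x0 + a + w))))"
  unfolding expectation_lazy_walk_Suc
proof (intro integral_cong_AE)
  show "AE X in measure_pmf (lazy_walk x0 t).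
     (\<Sum>w\<in>cube 1. lazy_kernel w * ((\<Prod>s\<in>{0..Suc t}. g s ((X @ [last X + w]) ! s - x0 + a)) *
        \<phi> ((X @ [last X + w]) ! Suc t - x0 + a)))
     = (\<Prod>s\<in>{0..t}. g s (X ! s - x0 + a)) *
        (\<Sum>w\<in>cube 1. lazy_kernel w * (g (Suc t) (X ! t - x0 + a + w) * \<phi> (X ! t - x0 + a + w)))"
  proof (unfold AE_measure_pmf_iff, intro ballI)
    fix X assume "X \<in> set_pmf (lazy_walk x0 t)"
    then have len: "length X = Suc t" by (rule lazy_walk_support)
    then have last: "last X = X ! t" by (subst last_conv_nth) auto
    have "(\<Prod>s\<in>{0..t}. g s ((X @ [y]) ! s - x0 + a)) = (\<Prod>s\<in>{0..t}. g s (X ! s - x0 + a))" for y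
      using len by (intro prod.cong refl) (simp add: nth_append)
    then have "(\<Prod>s\<in>{0..Suc t}. g s ((X @ [y]) ! s - x0 + a)) =
          (\<Prod>s\<in>{0..t}. g s (X ! s - x0 + a)) * g (Suc t) (y - x0 + a)" for y
      using len by (simp add: prod.atLeast0_atMost_Suc nth_append)
    moreover have shift: "X ! t + w - x0 + a = X ! t - x0 + a + w" for w by (simp add: algebra_simps)
    ultimately show "(\<Sum>w\<in>cube 1. lazy_kernel w * ((\<Prod>s\<in>{0..Suc t}. g s ((X @ [last X + w]) ! s - x0 + a)) *
        \<phi> ((X @ [last X + w]) ! Suc t - x0 + a)))
     = (\<Prod>s\<in>{0..t}. g s (X ! s - x0 + a)) *
        (\<Sum>w\<in>cube 1. lazy_kernel w * (g (Suc t) (X ! t - x0 + a + w) * \<phi> (X ! t - x0 + a + w)))"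
      using len by (simp add: last nth_append sum_distrib_left mult_ac shift)
  qed
qed simp_all

lemma lazy_killed_mass_Suc_sum:
  fixes \<phi> :: "int ^ 'd::finite \<Rightarrow> real"
  assumes "finite Om" and Om: "\<And>a x. a \<in> A \<Longrightarrow> x - a \<in> cube (int (Suc t)) \<Longrightarrow> x \<in> Om"
  shows "(\<Sum>u\<in>Om. lazy_killed_mass Om A g t u *
            (\<Sum>w\<in>cube 1. lazy_kernel w * (g (Suc t) (u + w) * \<phi> (u + w))))
       = (\<Sum>x\<in>Om. lazy_killed_mass Om A g (Suc t) x * \<phi> x)"
proof -
  have "(\<Sum>u\<in>Om. lazy_killed_mass Om A g t u *
            (\<Sum>w\<in>cube 1. lazy_kernel w * (g (Suc t) (u + w) * \<phi> (u + w))))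
      = (\<Sum>u\<in>Om. lazy_killed_mass Om A g t u * (\<Sum>x\<in>Om. lazy_kernel (x - u) * (g (Suc t) x * \<phi> x)))"
  proof (intro sum.cong refl)
    fix u
    show "lazy_killed_mass Om A g t u * (\<Sum>w\<in>cube 1. lazy_kernel w * (g (Suc t) (u + w) * \<phi> (u + w)))
        = lazy_killed_mass Om A g t u * (\<Sum>x\<in>Om. lazy_kernel (x - u) * (g (Suc t) x * \<phi> x))"
    proof (cases "lazy_killed_mass Om A g t u = 0")
      case False
      then obtain a where a: "a \<in> A" "u - a \<in> cube (int t)"
        using lazy_killed_mass_support by blast
      have "u + w \<in> Om" if "w \<in> cube 1" for w
        using Om[OF a(1)] add_in_cube[OF a(2) that] by (simp add: algebra_simps)
      then show ?thesis by (simp add: sum_lazy_kernel[OF \<open>finite Om\<close>])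
    qed simp
  qed
  also have "\<dots> = (\<Sum>x\<in>Om. \<Sum>u\<in>Om. lazy_killed_mass Om A g t u * (lazy_kernel (x - u) * (g (Suc t) x * \<phi> x)))"
    unfolding sum_distrib_left by (rule sum.swap)
  also have "\<dots> = (\<Sum>x\<in>Om. lazy_killed_mass Om A g (Suc t) x * \<phi> x)"
    unfolding killed_mass.simps sum_distrib_left sum_distrib_right
    by (intro sum.cong refl) (simp only: mult_ac)
  finally show ?thesis .
qed

lemma sum_expectation_lazy_walk_eq_killed_mass:
  fixes x0 :: "int ^ 'd::finite" and g :: "nat \<Rightarrow> int ^ 'd \<Rightarrow> real" and \<phi> :: "int ^ 'd \<Rightarrow> real"
  assumes "finite A" "finite Om" and "\<And>a x. a \<in> A \<Longrightarrow> x - a \<in> cube (int t) \<Longrightarrow> x \<in> Om"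
  shows "(\<Sum>a\<in>A. measure_pmf.expectation (lazy_walk x0 t)
            (\<lambda>X. (\<Prod>s\<in>{0..t}. g s (X ! s - x0 + a)) * \<phi> (X ! t - x0 + a)))
       = (\<Sum>x\<in>Om. lazy_killed_mass Om A g t x * \<phi> x)"
  using assms(3)
proof (induction t arbitrary: \<phi>)
  case 0
  then have "A \<subseteq> Om" by (force simp: cube_def)
  then have "(\<Sum>x\<in>Om. lazy_killed_mass Om A g 0 x * \<phi> x) = (\<Sum>x\<in>Om \<inter> A. g 0 x * \<phi> x)"
    unfolding sum.inter_restrict[OF \<open>finite Om\<close>] by (intro sum.cong) auto
  also have "Om \<inter> A = A" using \<open>A \<subseteq> Om\<close> by blast
  finally show ?case by simp
next
  case (Suc t)
  define \<psi> where "\<psi> u = (\<Sum>w\<in>cube 1. lazy_kernel w * (g (Suc t) (u + w) * \<phi> (u + w)))" for u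
  have "\<And>a x. a \<in> A \<Longrightarrow> x - a \<in> cube (int t) \<Longrightarrow> x \<in> Om"
    using Suc.prems cube_mono[of "int t" "int (Suc t)"] by auto
  then have "(\<Sum>a\<in>A. measure_pmf.expectation (lazy_walk x0 t)
            (\<lambda>X. (\<Prod>s\<in>{0..t}. g s (X ! s - x0 + a)) * \<psi> (X ! t - x0 + a)))
       = (\<Sum>u\<in>Om. lazy_killed_mass Om A g t u * \<psi> u)"
    by (rule Suc.IH)
  then show ?case
    by (simp only: expectation_lazy_walk_Suc_weighted \<psi>_def
        lazy_killed_mass_Suc_sum[OF \<open>finite Om\<close> Suc.prems])
qed

subsection \<open>Covered volume as a survival sum\<close>

definition avoid_weight :: "nat \<Rightarrow> (nat \<Rightarrow> int ^ 'd::finite) \<Rightarrow> nat \<Rightarrow> int ^ 'd \<Rightarrow> real" where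
  "avoid_weight n c s y = (if y + c s \<in> box_Q n then 0 else 1)"

definition shift_size :: "nat \<Rightarrow> (nat \<Rightarrow> int ^ 'd::finite) \<Rightarrow> int" where
  "shift_size t c = (\<Sum>s\<in>{0..t}. \<Sum>i\<in>UNIV. \<bar>c s $ i\<bar>)"

definition expected_covered_volume :: "int ^ 'd::finite \<Rightarrow> nat \<Rightarrow> nat \<Rightarrow> (nat \<Rightarrow> int ^ 'd) \<Rightarrow> real" where
  "expected_covered_volume x0 t n c = measure_pmf.expectation (lazy_walk x0 t)
     (\<lambda>X. vol (\<Union>s\<in>{0..t}. (\<lambda>q. X ! s + c s + q) ` box_Q n))"

lemma avoid_weight_nonneg: "0 \<le> avoid_weight n c s y"
  by (simp add: avoid_weight_def)

lemma shift_in_cube: "s \<le> t \<Longrightarrow> c s \<in> cube (shift_size t c)"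
proof -
  assume "s \<le> t"
  have "\<bar>c s $ i\<bar> \<le> shift_size t c" for i
  proof -
    have "\<bar>c s $ i\<bar> \<le> (\<Sum>j\<in>UNIV. \<bar>c s $ j\<bar>)" by (rule member_le_sum) auto
    also have "\<dots> \<le> shift_size t c"
      unfolding shift_size_def using \<open>s \<le> t\<close> by (intro member_le_sum) (auto intro: sum_nonneg)
    finally show ?thesis .
  qed
  then show ?thesis by (simp add: cube_def)
qed

text \<open>Translating by \<open>a - x\<^sub>0\<close> turns "the point \<open>x\<^sub>0 - a\<close> is covered" into "the walk
  started at \<open>a\<close> hits one of the boxes \<open>-c s + Q\<^sub>n\<close> at time \<open>s\<close>".\<close>
lemma vol_covered_eq_sum:
  fixes X :: "(int ^ 'd::finite) list"
  assumes "finite A" and "cube (int t + int n + shift_size t c) \<subseteq> A"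
    and X: "\<And>s. s \<le> t \<Longrightarrow> X ! s - x0 \<in> cube (int s)"
  shows "vol (\<Union>s\<in>{0..t}. (\<lambda>q. X ! s + c s + q) ` box_Q n)
       = (\<Sum>a\<in>A. 1 - (\<Prod>s\<in>{0..t}. avoid_weight n c s (X ! s - x0 + a)))"
proof -
  let ?U = "\<Union>s\<in>{0..t}. (\<lambda>q. X ! s + c s + q) ` box_Q n"
  let ?hit = "\<lambda>a. \<exists>s\<in>{0..t}. X ! s - x0 + a + c s \<in> box_Q n"
  have "(\<lambda>z. x0 - z) ` ?U = {a\<in>A. ?hit a}"
  proof (intro equalityI subsetI)
    fix a assume "a \<in> (\<lambda>z. x0 - z) ` ?U"
    then obtain s q where s: "s \<in> {0..t}" and q: "q \<in> box_Q n" and a: "a = x0 - (X ! s + c s + q)"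
      by auto
    have "X ! s - x0 + a + c s = - q" by (simp add: a algebra_simps)
    then have "X ! s - x0 + a + c s \<in> box_Q n" using q by (simp add: box_Q_eq_cube)
    then have "?hit a" using s by blast
    have "(X ! s - x0) + c s + q \<in> cube (int s + shift_size t c + int n)"
      using X[of s] s shift_in_cube[of s t c] q by (auto intro!: add_in_cube simp: box_Q_eq_cube)
    moreover have "cube (int s + shift_size t c + int n) \<subseteq> cube (int t + int n + shift_size t c)"
      using s by (intro cube_mono) auto
    ultimately have "- a \<in> cube (int t + int n + shift_size t c)"
      by (auto simp: a algebra_simps)
    then show "a \<in> {a\<in>A. ?hit a}" using assms(2) \<open>?hit a\<close> by auto
  next
    fix a assume "a \<in> {a\<in>A. ?hit a}"
    then obtain s where s: "s \<in> {0..t}" and hit: "X ! s - x0 + a + c s \<in> box_Q n" by auto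
    then have "- (X ! s - x0 + a + c s) \<in> box_Q n" by (simp only: box_Q_eq_cube uminus_in_cube_iff)
    moreover have "x0 - a = X ! s + c s + - (X ! s - x0 + a + c s)" by (simp add: algebra_simps)
    ultimately have "x0 - a \<in> ?U" using s by blast
    then show "a \<in> (\<lambda>z. x0 - z) ` ?U" using image_eqI[of a "\<lambda>z. x0 - z" "x0 - a"] by simp
  qed
  moreover have "vol ?U = real (card ((\<lambda>z. x0 - z) ` ?U))"
    by (simp add: vol_def card_image inj_on_def)
  ultimately have "vol ?U = real (card {a\<in>A. ?hit a})" by simp
  also have "\<dots> = (\<Sum>a\<in>A. if ?hit a then 1 else 0)"
    using \<open>finite A\<close> by (simp add: sum.If_cases Int_def)
  also have "\<dots> = (\<Sum>a\<in>A. 1 - (\<Prod>s\<in>{0..t}. avoid_weight n c s (X ! s - x0 + a)))"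
    by (intro sum.cong refl) (auto simp: avoid_weight_def prod_zero_iff)
  finally show ?thesis .
qed

lemma expected_covered_volume_eq_killed_mass:
  fixes x0 :: "int ^ 'd::finite"
  assumes "finite A" "finite Om" and A: "cube (int t + int n + shift_size t c) \<subseteq> A"
    and Om: "\<And>a x. a \<in> A \<Longrightarrow> x - a \<in> cube (int t) \<Longrightarrow> x \<in> Om"
  shows "expected_covered_volume x0 t n c
       = real (card A) - (\<Sum>x\<in>Om. lazy_killed_mass Om A (avoid_weight n c) t x)"
proof -
  let ?survive = "\<lambda>a X. (\<Prod>s\<in>{0..t}. avoid_weight n c s (X ! s - x0 + a)) * (\<lambda>_. 1) (X ! t - x0 + a)"
  have int: "integrable (measure_pmf (lazy_walk x0 t)) f" for f :: "_ \<Rightarrow> real"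
    by (rule integrable_measure_pmf_finite[OF finite_set_lazy_walk])
  have "expected_covered_volume x0 t n c
      = measure_pmf.expectation (lazy_walk x0 t) (\<lambda>X. \<Sum>a\<in>A. 1 - ?survive a X)"
    unfolding expected_covered_volume_def
  proof (intro integral_cong_AE)
    show "AE X in lazy_walk x0 t. vol (\<Union>s\<in>{0..t}. (\<lambda>q. X ! s + c s + q) ` box_Q n)
        = (\<Sum>a\<in>A. 1 - ?survive a X)"
    proof (unfold AE_measure_pmf_iff, intro ballI)
      fix X assume "X \<in> set_pmf (lazy_walk x0 t)"
      then show "vol (\<Union>s\<in>{0..t}. (\<lambda>q. X ! s + c s + q) ` box_Q n) = (\<Sum>a\<in>A. 1 - ?survive a X)"
        by (simp add: vol_covered_eq_sum[OF \<open>finite A\<close> A] lazy_walk_support(2))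
    qed
  qed simp_all
  also have "\<dots> = (\<Sum>a\<in>A. 1 - measure_pmf.expectation (lazy_walk x0 t) (?survive a))"
    by (simp add: Bochner_Integration.integral_sum Bochner_Integration.integral_diff int)
  also have "\<dots> = real (card A) - (\<Sum>x\<in>Om. lazy_killed_mass Om A (avoid_weight n c) t x * (\<lambda>_. 1) x)"
  proof -
    have "(\<Sum>a\<in>A. measure_pmf.expectation (lazy_walk x0 t) (?survive a))
        = (\<Sum>x\<in>Om. lazy_killed_mass Om A (avoid_weight n c) t x * (\<lambda>_. 1) x)"
      by (rule sum_expectation_lazy_walk_eq_killed_mass[OF assms(1,2) Om])
    then show ?thesis by (simp add: sum_subtractf)
  qed
  finally show ?thesis by simp
qed

subsection \<open>Polarization of the shifts\<close>

definition reflect :: "'d::finite \<Rightarrow> int \<Rightarrow> int ^ 'd \<Rightarrow> int ^ 'd" where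
  "reflect i k x = (\<chi> j. if j = i then k - x $ j else x $ j)"

definition half_space :: "'d::finite \<Rightarrow> int \<Rightarrow> bool \<Rightarrow> (int ^ 'd) set" where
  "half_space i k upper = {x. if upper then k < 2 * x $ i else 2 * x $ i < k}"

text \<open>The box avoided at time \<open>s\<close> is centred at \<open>- c s\<close>; polarization reflects the
  centres lying in the half-space to the other side of the hyperplane \<open>2 x\<^sub>i = k\<close>.\<close>
definition polarize :: "'d::finite \<Rightarrow> int \<Rightarrow> bool \<Rightarrow> (nat \<Rightarrow> int ^ 'd) \<Rightarrow> nat \<Rightarrow> int ^ 'd" where
  "polarize i k upper c s =
     (if - c s \<in> half_space i k upper then - reflect i k (- c s) else c s)"

lemma reflect_reflect [simp]: "reflect i k (reflect i k x) = x"
  by (simp add: reflect_def vec_eq_iff)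

lemma reflect_eq_iff [simp]: "reflect i k x = reflect i k y \<longleftrightarrow> x = y"
  by (metis reflect_reflect)

lemma reflect_in_half_space_iff:
  assumes "odd k"
  shows "reflect i k x \<in> half_space i k upper \<longleftrightarrow> x \<notin> half_space i k upper"
proof -
  have "2 * x $ i \<noteq> k" using assms by auto
  then show ?thesis by (auto simp: reflect_def half_space_def)
qed

lemma reflect_diff_reflect: "reflect i k x - reflect i k u = flip_coord i (x - u)"
  by (simp add: reflect_def flip_coord_def vec_eq_iff)

lemma reflect_diff: "reflect i k x - u = flip_coord i (x - reflect i k u)"
  by (simp add: reflect_def flip_coord_def vec_eq_iff)

lemma reflect_in_Un_image_iff: "reflect i k x \<in> B \<union> reflect i k ` B \<longleftrightarrow> x \<in> B \<union> reflect i k ` B"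
  by (auto simp: image_iff intro: bexI[of _ "reflect i k x"])

lemma coord_dist_same_side:
  assumes "x \<in> half_space i k upper" "u \<in> half_space i k upper"
  shows "\<bar>(x - u) $ i\<bar> \<le> \<bar>(reflect i k x - u) $ i\<bar>"
proof -
  have "if upper then k < 2 * x $ i \<and> k < 2 * u $ i else 2 * x $ i < k \<and> 2 * u $ i < k"
    using assms by (simp add: half_space_def)
  then have "\<bar>x $ i - u $ i\<bar> \<le> \<bar>k - x $ i - u $ i\<bar>" by (cases upper) arith+
  then show ?thesis by (simp add: reflect_def)
qed

lemma coord_dist_other_side:
  assumes "x \<in> half_space i k upper" "u \<notin> half_space i k upper"
  shows "\<bar>(reflect i k x - u) $ i\<bar> \<le> \<bar>(x - u) $ i\<bar>"
proof -
  have "if upper then k < 2 * x $ i \<and> 2 * u $ i \<le> k else 2 * x $ i < k \<and> k \<le> 2 * u $ i"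
    using assms by (auto simp: half_space_def)
  then have "\<bar>k - x $ i - u $ i\<bar> \<le> \<bar>x $ i - u $ i\<bar>" by (cases upper) arith+
  then show ?thesis by (simp add: reflect_def)
qed

lemma lazy_kernel_same_side:
  assumes "x \<in> half_space i k upper" "u \<in> half_space i k upper"
  shows "lazy_kernel (x - reflect i k u) \<le> lazy_kernel (x - u)"
proof -
  have "lazy_kernel (reflect i k x - u) \<le> lazy_kernel (x - u)"
    using coord_dist_same_side[OF assms] by (intro lazy_kernel_coord_mono[of i]) (auto simp: reflect_def)
  then show ?thesis by (simp add: reflect_diff)
qed

lemma avoid_weight_polarize:
  assumes x: "x \<in> half_space i k upper"
  shows "avoid_weight n (polarize i k upper c) s x
           = max (avoid_weight n c s x) (avoid_weight n c s (reflect i k x))"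
    and "avoid_weight n (polarize i k upper c) s (reflect i k x)
           = min (avoid_weight n c s x) (avoid_weight n c s (reflect i k x))"
proof -
  let ?w = "avoid_weight n c s" and ?w' = "avoid_weight n (polarize i k upper c) s"
  define u where "u = - c s"
  have w: "?w y = (if y - u \<in> cube (int n) then 0 else 1)" for y
    by (simp add: avoid_weight_def u_def box_Q_eq_cube)
  have closer: "y - u \<in> cube (int n) \<Longrightarrow> z - u \<in> cube (int n)"
    if "\<bar>(z - u) $ i\<bar> \<le> \<bar>(y - u) $ i\<bar>" and "\<And>j. j \<noteq> i \<Longrightarrow> z $ j = y $ j" for y z
    using that by (intro in_cube_if_coord_le[of i "z - u" "y - u"]) auto
  have "?w' x = max (?w x) (?w (reflect i k x)) \<and> ?w' (reflect i k x) = min (?w x) (?w (reflect i k x))"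
  proof (cases "u \<in> half_space i k upper")
    case False
    then have "?w' = ?w" by (simp add: avoid_weight_def polarize_def u_def fun_eq_iff)
    moreover have "?w (reflect i k x) \<le> ?w x"
      using closer[OF coord_dist_other_side[OF x False]] by (simp add: w reflect_def)
    ultimately show ?thesis by (simp add: max_absorb1 min_absorb2)
  next
    case True
    then have w': "?w' y = (if y - reflect i k u \<in> cube (int n) then 0 else 1)" for y
      by (simp add: avoid_weight_def polarize_def u_def box_Q_eq_cube)
    have "?w' x = ?w (reflect i k x)" "?w' (reflect i k x) = ?w x"
      unfolding w w' by (simp_all only: reflect_diff reflect_diff_reflect reflect_reflect flip_coord_in_cube_iff)
    moreover have "?w x \<le> ?w (reflect i k x)"
      using closer[OF coord_dist_same_side[OF x True]] by (simp add: w reflect_def)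
    ultimately show ?thesis by (simp add: max_absorb2 min_absorb1)
  qed
  then show "?w' x = max (?w x) (?w (reflect i k x))"
    and "?w' (reflect i k x) = min (?w x) (?w (reflect i k x))" by auto
qed

lemma reflection_pairing_reflect:
  assumes "odd k" and "\<And>x. x \<in> Om \<Longrightarrow> reflect i k x \<in> Om" and "finite Om"
  shows "reflection_pairing Om (reflect i k) (half_space i k upper)"
  using assms by unfold_locales (simp_all add: reflect_in_half_space_iff)

lemma killed_mass_sum_le_polarize:
  fixes Om A :: "(int ^ 'd::finite) set"
  assumes "odd k" and "finite Om" and Om: "\<And>x. x \<in> Om \<Longrightarrow> reflect i k x \<in> Om"
    and A: "\<And>x. reflect i k x \<in> A \<longleftrightarrow> x \<in> A"
  shows "(\<Sum>x\<in>Om. lazy_killed_mass Om A (avoid_weight n c) t x)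
       \<le> (\<Sum>x\<in>Om. lazy_killed_mass Om A (avoid_weight n (polarize i k upper c)) t x)"
proof -
  interpret reflection_pairing Om "reflect i k" "half_space i k upper"
    using assms by (intro reflection_pairing_reflect)
  show ?thesis
  proof (intro sum_le_if_dominated killed_mass_rearrangement)
    show "lazy_kernel (reflect i k x - reflect i k u) = lazy_kernel (x - u)"
      and "lazy_kernel (reflect i k x - u) = lazy_kernel (x - reflect i k u)" for x u
      by (simp_all add: reflect_diff_reflect reflect_diff)
  qed (simp_all add: A lazy_kernel_nonneg lazy_kernel_same_side avoid_weight_nonneg avoid_weight_polarize)
qed

lemma expected_covered_volume_polarize_le:
  fixes x0 :: "int ^ 'd::finite"
  assumes "odd k" and smaller: "shift_size t (polarize i k upper c) \<le> shift_size t c"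
  shows "expected_covered_volume x0 t n (polarize i k upper c) \<le> expected_covered_volume x0 t n c"
proof -
  define R where "R = int t + int n + shift_size t c"
  define A :: "(int ^ 'd) set" where "A = cube R \<union> reflect i k ` cube R"
  define Om :: "(int ^ 'd) set" where "Om = cube (R + int t) \<union> reflect i k ` cube (R + int t)"
  have "finite A" "finite Om" by (simp_all add: A_def Om_def finite_cube)
  have A_c: "cube (int t + int n + shift_size t c) \<subseteq> A"
    and A_pc: "cube (int t + int n + shift_size t (polarize i k upper c)) \<subseteq> A"
    using cube_mono[of "int t + int n + shift_size t (polarize i k upper c)" "int t + int n + shift_size t c"]
      smaller by (auto simp: A_def R_def)
  have Om: "x \<in> Om" if "a \<in> A" and "x - a \<in> cube (int t)" for a x
    using that(1) unfolding A_def
  proof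
    assume "a \<in> cube R"
    then show "x \<in> Om" using add_in_cube[OF _ that(2)] by (force simp: Om_def)
  next
    assume "a \<in> reflect i k ` cube R"
    then obtain b where b: "b \<in> cube R" and a: "a = reflect i k b" by auto
    have "reflect i k x - b = flip_coord i (x - a)" by (simp add: a reflect_diff)
    then have "reflect i k x - b \<in> cube (int t)" using that(2) by simp
    then have "b + (reflect i k x - b) \<in> cube (R + int t)" by (rule add_in_cube[OF b])
    then have "reflect i k x \<in> cube (R + int t)" by simp
    then show "x \<in> Om" unfolding Om_def by (metis UnI2 image_eqI reflect_reflect)
  qed
  have "(\<Sum>x\<in>Om. lazy_killed_mass Om A (avoid_weight n c) t x)
      \<le> (\<Sum>x\<in>Om. lazy_killed_mass Om A (avoid_weight n (polarize i k upper c)) t x)"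
    using \<open>odd k\<close> \<open>finite Om\<close>
    by (rule killed_mass_sum_le_polarize) (simp_all only: A_def Om_def reflect_in_Un_image_iff)
  then show ?thesis
    by (simp add: expected_covered_volume_eq_killed_mass[OF \<open>finite A\<close> \<open>finite Om\<close> A_c Om]
        expected_covered_volume_eq_killed_mass[OF \<open>finite A\<close> \<open>finite Om\<close> A_pc Om])
qed

subsection \<open>Descent to the unshifted walk\<close>

lemma shift_size_nonneg: "0 \<le> shift_size t c"
  unfolding shift_size_def by (intro sum_nonneg) auto

lemma shift_size_eq_0_iff: "shift_size t c = 0 \<longleftrightarrow> (\<forall>s\<le>t. c s = 0)"
  unfolding shift_size_def
  by (subst sum_nonneg_eq_0_iff) (auto intro: sum_nonneg simp: sum_nonneg_eq_0_iff vec_eq_iff)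

lemma expected_covered_volume_cong:
  "(\<And>s. s \<le> t \<Longrightarrow> c s = c' s) \<Longrightarrow> expected_covered_volume x0 t n c = expected_covered_volume x0 t n c'"
  unfolding expected_covered_volume_def by (intro arg_cong[where f="measure_pmf.expectation _"] ext
      arg_cong[where f=vol] SUP_cong) auto

lemma polarize_nth:
  "- c s \<in> half_space i k upper \<Longrightarrow>
     polarize i k upper c s $ j = (if j = i then - (k - (- c s) $ i) else c s $ j)"
  by (simp add: polarize_def reflect_def)

lemma shift_size_polarize_less:
  assumes closer: "\<And>s. s \<le> t \<Longrightarrow> - c s \<in> half_space i k upper \<Longrightarrow> \<bar>k - (- c s) $ i\<bar> < \<bar>(- c s) $ i\<bar>"
    and moved: "\<exists>s\<le>t. - c s \<in> half_space i k upper"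
  shows "shift_size t (polarize i k upper c) < shift_size t c"
  unfolding shift_size_def
proof (rule sum_strict_mono_ex1)
  have less: "(\<Sum>j\<in>UNIV. \<bar>polarize i k upper c s $ j\<bar>) < (\<Sum>j\<in>UNIV. \<bar>c s $ j\<bar>)"
    if "s \<le> t" and H: "- c s \<in> half_space i k upper" for s
    using closer[OF that]
    by (intro sum_strict_mono_ex1) (auto simp: polarize_nth[where c=c and s=s, OF H] intro!: bexI[of _ i])
  show "\<forall>s\<in>{0..t}. (\<Sum>j\<in>UNIV. \<bar>polarize i k upper c s $ j\<bar>) \<le> (\<Sum>j\<in>UNIV. \<bar>c s $ j\<bar>)"
    using less by (force simp: polarize_def)
  show "\<exists>s\<in>{0..t}. (\<Sum>j\<in>UNIV. \<bar>polarize i k upper c s $ j\<bar>) < (\<Sum>j\<in>UNIV. \<bar>c s $ j\<bar>)"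
  proof -
    obtain s where "s \<le> t" "- c s \<in> half_space i k upper" using moved by blast
    then show ?thesis using less by (intro bexI[of _ s]) auto
  qed
qed simp

text \<open>If some \<open>i\<close>-th coordinate of the centres \<open>- c s\<close> is positive, reflect in the
  hyperplane just below their maximum \<open>m\<close>: only centres with coordinate \<open>m\<close> move, to \<open>m - 1\<close>.
  Otherwise reflect in the hyperplane just above their (negative) minimum.\<close>
lemma exists_polarize_shift_size_less:
  assumes "shift_size t c \<noteq> 0"
  obtains i k upper where "odd k" and "shift_size t (polarize i k upper c) < shift_size t c"
proof -
  obtain s0 i where "s0 \<le> t" and "c s0 $ i \<noteq> 0"
    using assms by (auto simp: shift_size_eq_0_iff vec_eq_iff)
  define E where "E = (\<lambda>s. (- c s) $ i) ` {0..t}"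
  have "finite E" "E \<noteq> {}" by (auto simp: E_def)
  show ?thesis
  proof (cases "\<exists>s\<le>t. 0 < (- c s) $ i")
    case True
    define m where "m = Max E"
    have le_m: "(- c s) $ i \<le> m" if "s \<le> t" for s
      using that \<open>finite E\<close> by (auto simp: m_def E_def)
    have "m \<in> E" unfolding m_def using \<open>finite E\<close> \<open>E \<noteq> {}\<close> by (rule Max_in)
    then obtain s1 where "s1 \<le> t" "(- c s1) $ i = m" by (auto simp: E_def)
    have "0 < m" using True le_m by force
    have "shift_size t (polarize i (2 * m - 1) True c) < shift_size t c"
    proof (rule shift_size_polarize_less)
      fix s assume "s \<le> t" and "- c s \<in> half_space i (2 * m - 1) True"
      then have "(- c s) $ i = m" using le_m[of s] by (simp add: half_space_def)
      then show "\<bar>2 * m - 1 - (- c s) $ i\<bar> < \<bar>(- c s) $ i\<bar>" using \<open>0 < m\<close> by simp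
    next
      show "\<exists>s\<le>t. - c s \<in> half_space i (2 * m - 1) True"
        using \<open>s1 \<le> t\<close> \<open>(- c s1) $ i = m\<close> by (auto simp: half_space_def)
    qed
    then show ?thesis by (rule that[rotated]) simp
  next
    case False
    define m where "m = Min E"
    have m_le: "m \<le> (- c s) $ i" if "s \<le> t" for s
      using that \<open>finite E\<close> by (auto simp: m_def E_def)
    have "m \<in> E" unfolding m_def using \<open>finite E\<close> \<open>E \<noteq> {}\<close> by (rule Min_in)
    then obtain s1 where "s1 \<le> t" "(- c s1) $ i = m" by (auto simp: E_def)
    have "(- c s0) $ i < 0" using False \<open>s0 \<le> t\<close> \<open>c s0 $ i \<noteq> 0\<close> by force
    then have "m < 0" using m_le[OF \<open>s0 \<le> t\<close>] by simp
    have "shift_size t (polarize i (2 * m + 1) False c) < shift_size t c"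
    proof (rule shift_size_polarize_less)
      fix s assume "s \<le> t" and "- c s \<in> half_space i (2 * m + 1) False"
      then have "(- c s) $ i = m" using m_le[of s] by (simp add: half_space_def)
      then show "\<bar>2 * m + 1 - (- c s) $ i\<bar> < \<bar>(- c s) $ i\<bar>" using \<open>m < 0\<close> by simp
    next
      show "\<exists>s\<le>t. - c s \<in> half_space i (2 * m + 1) False"
        using \<open>s1 \<le> t\<close> \<open>(- c s1) $ i = m\<close> by (auto simp: half_space_def)
    qed
    then show ?thesis by (rule that[rotated]) simp
  qed
qed

lemma expected_covered_volume_unshifted_le:
  "expected_covered_volume x0 t n (\<lambda>_. 0) \<le> expected_covered_volume x0 t n c"
proof (induction "nat (shift_size t c)" arbitrary: c rule: less_induct)
  case less
  show ?case
  proof (cases "shift_size t c = 0")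
    case True
    then have "expected_covered_volume x0 t n c = expected_covered_volume x0 t n (\<lambda>_. 0)"
      by (intro expected_covered_volume_cong) (simp add: shift_size_eq_0_iff)
    then show ?thesis by simp
  next
    case False
    then obtain i k upper where "odd k" and smaller: "shift_size t (polarize i k upper c) < shift_size t c"
      by (rule exists_polarize_shift_size_less)
    then have "nat (shift_size t (polarize i k upper c)) < nat (shift_size t c)"
      using shift_size_nonneg[of t "polarize i k upper c"] by simp
    then have "expected_covered_volume x0 t n (\<lambda>_. 0) \<le> expected_covered_volume x0 t n (polarize i k upper c)"
      by (rule less.hyps)
    also have "\<dots> \<le> expected_covered_volume x0 t n c"
      using \<open>odd k\<close> smaller by (intro expected_covered_volume_polarize_le) simp_all
    finally show ?thesis .
  qed
qed

theorem proposition1p4: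
  fixes x0 :: "int ^ 'd::finite" and f :: "nat \<Rightarrow> int ^ 'd" and t n :: nat
  shows "measure_pmf.expectation (lazy_walk x0 t)
           (\<lambda>X. vol (\<Union>s\<in>{0..t}. (\<lambda>q. X ! s + f s + q) ` box_Q n))
         \<ge> measure_pmf.expectation (lazy_walk x0 t)
           (\<lambda>X. vol (\<Union>s\<in>{0..t}. (\<lambda>q. X ! s + q) ` box_Q n))"
  using expected_covered_volume_unshifted_le[of x0 t n f]
  by (simp add: expected_covered_volume_def)

end
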